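(* Let $K$ be a simplicial complex on the vertex set $[m]$ which has a minimal Taylor resolution. Then there exist a finite set $W$ and a sequence $\mathtt{N}$ of subsets of $W$ such that $K\cong K(\mathtt{N})$.
   Context: For a finite set $W$ and a sequence $\mathtt{N}=\{N_1,\ldots,N_r\}$ of subsets of $W$ (repetitions allowed), choose distinct new points $a_1,\ldots,a_r\notin W$, put $\widetilde{N}_i=N_i\sqcup\{a_i\}$ and $V=W\sqcup\{a_1,\ldots,a_r\}$; $K(\mathtt{N})$ is the simplicial complex on vertex set $V$ whose minimal non-faces are exactly $\widetilde{N}_1,\ldots,\widetilde{N}_r$. A minimal non-face of $K$ is a non-empty $N\subset[m]$ with $N\notin K$ and $N-\{i\}\in K$ for all $i\in N$. With $N_1,\ldots,N_r$ the minimal non-faces of $K$, $K$ has a minimal Taylor resolution iff the Taylor resolution of $\Bbbk[K]$ (free on $w_{i_1,\ldots,i_\ell}$, differential $d(w_{i_1,\ldots,i_\ell})=\sum_k(-1)^{k+1}v_{(N_{i_1}\cup\cdots\cup N_{i_\ell})-(N_{i_1}\cup\cdots\widehat{N_{i_k}}\cdots\cup N_{i_\ell})}w_{i_1,\ldots,\widehat{i_k},\ldots,i_\ell}$) satisfies $d\otimes\Bbbk=0$; equivalently $N_i\not\subset\bigcup_{k\ne i}N_k$ for all $i$. Ghost vertices of $K$ are allowed. *)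

theory Defs
  imports Main
begin

text \<open>A simplicial complex on vertex set V: a family of subsets of V containing the
empty set and closed under taking subsets (ghost vertices allowed).\<close>
definition simplicial_complex :: "'a set \<Rightarrow> 'a set set \<Rightarrow> bool" where
  "simplicial_complex V K \<longleftrightarrow> finite V \<and> K \<subseteq> Pow V \<and> {} \<in> K \<and>
     (\<forall>\<sigma> \<in> K. \<forall>\<tau>. \<tau> \<subseteq> \<sigma> \<longrightarrow> \<tau> \<in> K)"

definition min_non_face :: "'a set \<Rightarrow> 'a set set \<Rightarrow> 'a set \<Rightarrow> bool" where
  "min_non_face V K N \<longleftrightarrow> N \<noteq> {} \<and> N \<subseteq> V \<and> N \<notin> K \<and> (\<forall>i \<in> N. N - {i} \<in> K)"

definition min_non_faces :: "'a set \<Rightarrow> 'a set set \<Rightarrow> 'a set set" where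
  "min_non_faces V K = {N. min_non_face V K N}"

text \<open>K has a minimal Taylor resolution: d \<otimes> k = 0 for the Taylor resolution, i.e.
every coefficient monomial of the differential is non-constant: for every set S of
minimal non-faces (the index of a basis element w_S) and every N in S, the monomial
v indexed by (union S) - (union (S - {N})) is not 1, i.e. this set is nonempty.\<close>
definition has_minimal_Taylor_resolution :: "'a set \<Rightarrow> 'a set set \<Rightarrow> bool" where
  "has_minimal_Taylor_resolution V K \<longleftrightarrow>
     (\<forall>S \<subseteq> min_non_faces V K. \<forall>N \<in> S. \<Union>S - \<Union>(S - {N}) \<noteq> {})"

definition sc_iso :: "'a set \<Rightarrow> 'a set set \<Rightarrow> 'b set \<Rightarrow> 'b set set \<Rightarrow> bool" where
  "sc_iso V K V' K' \<longleftrightarrow> (\<exists>f. bij_betw f V V' \<and> (\<forall>\<sigma> \<subseteq> V. \<sigma> \<in> K \<longleftrightarrow> f ` \<sigma> \<in> K'))"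

text \<open>The complex K(N) for W and a sequence Ns = [N_1,...,N_r] of subsets of W.
New points a_i are realised as Inr i, points of W as Inl w.\<close>
definition KN_vertices :: "'b set \<Rightarrow> 'b set list \<Rightarrow> ('b + nat) set" where
  "KN_vertices W Ns = Inl ` W \<union> Inr ` {..<length Ns}"

definition KN_tilde :: "'b set list \<Rightarrow> nat \<Rightarrow> ('b + nat) set" where
  "KN_tilde Ns i = Inl ` (Ns ! i) \<union> {Inr i}"

definition KN :: "'b set \<Rightarrow> 'b set list \<Rightarrow> ('b + nat) set set" where
  "KN W Ns = {\<sigma>. \<sigma> \<subseteq> KN_vertices W Ns \<and> (\<forall>i < length Ns. \<not> KN_tilde Ns i \<subseteq> \<sigma>)}"

end

theory Submission
  imports Defs
begin

text \<open>A complex is determined by its minimal non-faces. If the Taylor resolution is minimal,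
every minimal non-face N has a private vertex a(N), i.e. one lying in no other minimal
non-face. Deleting the private vertices gives W and the sets N - {a(N)}; sending the new
point of K(N) attached to N back to a(N) identifies each N with its copy in K(N), and hence
identifies K with K(N).\<close>

lemma inj_on_image_subset_iff:
  assumes "inj_on f C" "A \<subseteq> C" "B \<subseteq> C"
  shows "f ` A \<subseteq> f ` B \<longleftrightarrow> A \<subseteq> B"
  using assms unfolding inj_on_def by blast

lemma simplicial_complex_subset_closed:
  assumes "simplicial_complex V K" "\<sigma> \<in> K" "\<tau> \<subseteq> \<sigma>"
  shows "\<tau> \<in> K"
  using assms unfolding simplicial_complex_def by blast

lemma simplicial_complex_contains_min_non_face:
  assumes "simplicial_complex V K" "\<sigma> \<subseteq> V" "\<sigma> \<notin> K"
  shows "\<exists>N \<in> min_non_faces V K. N \<subseteq> \<sigma>"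
proof -
  have "finite \<sigma>"
    using assms unfolding simplicial_complex_def by (meson finite_subset)
  then show ?thesis
    using assms(2,3)
  proof (induction "card \<sigma>" arbitrary: \<sigma> rule: less_induct)
    case less
    show ?case
    proof (cases "\<forall>i\<in>\<sigma>. \<sigma> - {i} \<in> K")
      case True
      have "\<sigma> \<noteq> {}"
        using less assms(1) unfolding simplicial_complex_def by auto
      with True less have "\<sigma> \<in> min_non_faces V K"
        unfolding min_non_faces_def min_non_face_def by auto
      then show ?thesis by blast
    next
      case False
      then obtain i where i: "i \<in> \<sigma>" "\<sigma> - {i} \<notin> K" by blast
      then have "card (\<sigma> - {i}) < card \<sigma>"
        using less.prems(1) by (meson card_Diff1_less)
      then have "\<exists>N \<in> min_non_faces V K. N \<subseteq> \<sigma> - {i}"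
        using less.hyps less.prems i by blast
      then show ?thesis by blast
    qed
  qed
qed

lemma simplicial_complex_mem_iff_no_min_non_face:
  assumes "simplicial_complex V K" "\<sigma> \<subseteq> V"
  shows "\<sigma> \<in> K \<longleftrightarrow> (\<forall>N \<in> min_non_faces V K. \<not> N \<subseteq> \<sigma>)"
proof
  assume "\<sigma> \<in> K"
  then show "\<forall>N \<in> min_non_faces V K. \<not> N \<subseteq> \<sigma>"
    using assms(1) simplicial_complex_subset_closed
    unfolding min_non_faces_def min_non_face_def by blast
next
  assume "\<forall>N \<in> min_non_faces V K. \<not> N \<subseteq> \<sigma>"
  then show "\<sigma> \<in> K"
    using simplicial_complex_contains_min_non_face[OF assms] by blast
qed

lemma finite_min_non_faces:
  assumes "finite V"
  shows "finite (min_non_faces V K)"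
  by (rule finite_subset[of _ "Pow V"])
    (use assms in \<open>auto simp: min_non_faces_def min_non_face_def\<close>)

lemma minimal_Taylor_resolution_private_vertex:
  assumes "has_minimal_Taylor_resolution V K" "N \<in> min_non_faces V K"
  shows "\<exists>x \<in> N. \<forall>N' \<in> min_non_faces V K. N' \<noteq> N \<longrightarrow> x \<notin> N'"
proof -
  let ?M = "min_non_faces V K"
  have "\<Union>?M - \<Union>(?M - {N}) \<noteq> {}"
    using assms unfolding has_minimal_Taylor_resolution_def by (meson order_refl)
  then show ?thesis by blast
qed

lemma sc_iso_of_bij_betw_converse:
  assumes "bij_betw h V' V" and "\<And>\<sigma>'. \<sigma>' \<subseteq> V' \<Longrightarrow> \<sigma>' \<in> K' \<longleftrightarrow> h ` \<sigma>' \<in> K"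
  shows "sc_iso V K V' K'"
  unfolding sc_iso_def
proof (intro exI conjI allI impI)
  let ?f = "the_inv_into V' h"
  show "bij_betw ?f V V'"
    using assms(1) by (rule bij_betw_the_inv_into)
  fix \<sigma> assume "\<sigma> \<subseteq> V"
  moreover from this have "?f ` \<sigma> \<subseteq> V'"
    using assms(1) by (auto intro!: the_inv_into_into simp: bij_betw_def)
  moreover from \<open>\<sigma> \<subseteq> V\<close> have "h ` ?f ` \<sigma> = \<sigma>"
    using assms(1) by (simp add: image_comp bij_betw_def f_the_inv_into_f subset_iff cong: image_cong)
  ultimately
  show "\<sigma> \<in> K \<longleftrightarrow> ?f ` \<sigma> \<in> K'"
    using assms(2) by metis
qed

locale private_vertex_enumeration =
  fixes V :: "'a set" and xs :: "'a set list" and a :: "'a set \<Rightarrow> 'a"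
  assumes distinct_xs: "distinct xs"
    and xs_subset: "N \<in> set xs \<Longrightarrow> N \<subseteq> V"
    and private_mem: "N \<in> set xs \<Longrightarrow> a N \<in> N"
    and private_not_mem: "N \<in> set xs \<Longrightarrow> N' \<in> set xs \<Longrightarrow> N' \<noteq> N \<Longrightarrow> a N \<notin> N'"
begin

definition W :: "'a set" where
  "W = V - a ` set xs"

definition Ns :: "'a set list" where
  "Ns = map (\<lambda>N. N - {a N}) xs"

definition vertex_map :: "'a + nat \<Rightarrow> 'a" where
  "vertex_map z = (case z of Inl w \<Rightarrow> w | Inr i \<Rightarrow> a (xs ! i))"

lemma length_Ns [simp]: "length Ns = length xs"
  by (simp add: Ns_def)

lemma inj_on_private: "inj_on a (set xs)"
  by (metis inj_onI private_mem private_not_mem)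

lemma mem_W_iff: "w \<in> W \<longleftrightarrow> w \<in> V \<and> (\<forall>N \<in> set xs. w \<noteq> a N)"
  unfolding W_def by auto

lemma private_mem_V: "N \<in> set xs \<Longrightarrow> a N \<in> V"
  using xs_subset private_mem by blast

lemma private_not_mem_W: "N \<in> set xs \<Longrightarrow> a N \<notin> W"
  by (simp add: W_def)

lemma finite_W: "finite V \<Longrightarrow> finite W"
  by (simp add: W_def)

lemma Ns_subset_W: "N \<in> set Ns \<Longrightarrow> N \<subseteq> W"
  using xs_subset private_not_mem by (fastforce simp: Ns_def mem_W_iff)

lemma bij_betw_vertex_map: "bij_betw vertex_map (KN_vertices W Ns) V"
proof -
  have "inj_on vertex_map (KN_vertices W Ns)"
  proof
    fix x y assume xy: "x \<in> KN_vertices W Ns" "y \<in> KN_vertices W Ns" "vertex_map x = vertex_map y"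
    show "x = y"
    proof (cases x; cases y)
      fix i j assume "x = Inr i" "y = Inr j"
      with xy have "i < length xs" "j < length xs" "a (xs ! i) = a (xs ! j)"
        by (auto simp: KN_vertices_def vertex_map_def)
      then show "x = y"
        using \<open>x = Inr i\<close> \<open>y = Inr j\<close> inj_on_private distinct_xs
        by (simp add: inj_on_eq_iff nth_eq_iff_index_eq)
    qed (use xy private_not_mem_W in \<open>auto simp: KN_vertices_def vertex_map_def\<close>)
  qed
  moreover have "vertex_map ` KN_vertices W Ns = V"
  proof
    show "vertex_map ` KN_vertices W Ns \<subseteq> V"
      using private_mem_V by (auto simp: KN_vertices_def vertex_map_def W_def)
    show "V \<subseteq> vertex_map ` KN_vertices W Ns"
    proof
      fix v assume "v \<in> V"
      show "v \<in> vertex_map ` KN_vertices W Ns"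
      proof (cases "v \<in> W")
        case True
        then have "Inl v \<in> KN_vertices W Ns"
          by (simp add: KN_vertices_def)
        then show ?thesis
          by (force simp: vertex_map_def)
      next
        case False
        with \<open>v \<in> V\<close> obtain i where "i < length xs" "v = a (xs ! i)"
          by (auto simp: mem_W_iff in_set_conv_nth)
        then have "Inr i \<in> KN_vertices W Ns" "vertex_map (Inr i) = v"
          by (simp_all add: KN_vertices_def vertex_map_def)
        then show ?thesis by force
      qed
    qed
  qed
  ultimately show ?thesis
    by (simp add: bij_betw_def)
qed

lemma KN_tilde_subset_vertices:
  assumes "i < length xs"
  shows "KN_tilde Ns i \<subseteq> KN_vertices W Ns"
  using assms Ns_subset_W[of "Ns ! i"] by (auto simp: KN_tilde_def KN_vertices_def)

lemma vertex_map_KN_tilde: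
  assumes "i < length xs"
  shows "vertex_map ` KN_tilde Ns i = xs ! i"
  using assms private_mem[of "xs ! i"]
  by (auto simp: KN_tilde_def Ns_def vertex_map_def image_image)

lemma KN_iff_no_member:
  assumes "\<sigma>' \<subseteq> KN_vertices W Ns"
  shows "\<sigma>' \<in> KN W Ns \<longleftrightarrow> (\<forall>N \<in> set xs. \<not> N \<subseteq> vertex_map ` \<sigma>')"
proof -
  have inj: "inj_on vertex_map (KN_vertices W Ns)"
    using bij_betw_vertex_map by (rule bij_betw_imp_inj_on)
  have "KN_tilde Ns i \<subseteq> \<sigma>' \<longleftrightarrow> xs ! i \<subseteq> vertex_map ` \<sigma>'" if "i < length xs" for i
    using inj_on_image_subset_iff[OF inj KN_tilde_subset_vertices[OF that] assms]
      vertex_map_KN_tilde[OF that] by simp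
  then show ?thesis
    using assms by (auto simp: KN_def all_set_conv_all_nth)
qed

theorem sc_iso_KN:
  assumes "simplicial_complex V K" "set xs = min_non_faces V K"
  shows "sc_iso V K (KN_vertices W Ns) (KN W Ns)"
proof (rule sc_iso_of_bij_betw_converse[OF bij_betw_vertex_map])
  fix \<sigma>' assume "\<sigma>' \<subseteq> KN_vertices W Ns"
  moreover from this have "vertex_map ` \<sigma>' \<subseteq> V"
    using bij_betw_vertex_map by (auto simp: bij_betw_def)
  ultimately show "\<sigma>' \<in> KN W Ns \<longleftrightarrow> vertex_map ` \<sigma>' \<in> K"
    using assms by (simp add: KN_iff_no_member simplicial_complex_mem_iff_no_min_non_face)
qed

end

theorem proposition2p3:
  fixes m :: nat and K :: "nat set set"
  assumes "simplicial_complex {1..m} K"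
    and "has_minimal_Taylor_resolution {1..m} K"
  shows "\<exists>(W :: nat set) (Ns :: nat set list). finite W \<and> (\<forall>N \<in> set Ns. N \<subseteq> W) \<and>
           sc_iso {1..m} K (KN_vertices W Ns) (KN W Ns)"
proof -
  let ?M = "min_non_faces {1..m} K"
  obtain a where a: "\<And>N. N \<in> ?M \<Longrightarrow> a N \<in> N \<and> (\<forall>N' \<in> ?M. N' \<noteq> N \<longrightarrow> a N \<notin> N')"
    using minimal_Taylor_resolution_private_vertex[OF assms(2)] by metis
  obtain xs where xs: "set xs = ?M" "distinct xs"
    using finite_distinct_list[OF finite_min_non_faces] by blast
  interpret private_vertex_enumeration "{1..m}" xs a
  proof
    show "N \<in> set xs \<Longrightarrow> N \<subseteq> {1..m}" for N
      using xs(1) by (simp add: min_non_faces_def min_non_face_def)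
  qed (use xs a in blast)+
  have "finite W"
    by (rule finite_W) simp
  with Ns_subset_W sc_iso_KN[OF assms(1) xs(1)] show ?thesis
    by (intro exI conjI ballI)
qed

end
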